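(* Let $G$ be a connected graph with vertex set $\{u_1,\dots,u_n\}$, $n\ge2$, let $U_1,\dots,U_k$ be the non-singleton true twin equivalence classes of $G$, and let $\mathcal{H}=\{H_1,\dots,H_n\}$ be a family of graphs. Then $$\operatorname{adim}_l(G\circ\mathcal{H})=\sum_{i=1}^n\operatorname{adim}_l(H_i)+\sum_{j:\,I\cap U_j\ne\emptyset}(|I\cap U_j|-1)+\varrho'(G,\mathcal{H}).$$
   Context: All graphs are finite and simple with at least one vertex. $d_G$ is shortest-path distance ($+\infty$ between components), $d_{G,2}(x,y)=\min\{d_G(x,y),2\}$; $s$ distinguishes $x,y$ w.r.t. $d$ if $d(s,x)\ne d(s,y)$. $\operatorname{adim}_l(H)$ is the minimum size of $S\subseteq V(H)$ such that any two adjacent vertices of $H$ are distinguished w.r.t. $d_{H,2}$ by some vertex of $S$; minimum such sets are local adjacency bases. $\Phi$: class of edgeless graphs. $\mathcal{G}$: class of graphs $H$ such that every local adjacency basis $B$ of $H$ satisfies $B\subseteq N_H(v)$ for some $v\in V(H)$. True twins: $N[x]=N[y]$. Lexicographic product $G\circ\mathcal{H}$: vertex set $\bigcup_i\{u_i\}\times V(H_i)$, $(u_i,v)\sim(u_j,w)$ iff $u_iu_j\in E(G)$, or $i=j$ and $vw\in E(H_i)$. Notation: $T(G)=\bigcup_j U_j$; $V_E=\{u_i\in V(G)-T(G): H_i\in\Phi\}$; $I=\{u_i: H_i\in\mathcal{G}\}$; for each $j$ with $I\cap U_j\ne\emptyset$ choose (arbitrarily) one vertex of $I\cap U_j$ and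 let $I'_j$ be the remaining vertices of $I\cap U_j$ ($I'_j=\emptyset$ otherwise); $X_E=I-\bigcup_jI'_j$. Two vertices $u_i,u_j\in X_E$ satisfy $\mathcal{R}'$ iff $u_i\sim u_j$ and $d_{G,2}(u,u_i)=d_{G,2}(u,u_j)$ for all $u\in V(G)-(V_E\cup\{u_i,u_j\})$. $\varrho'(G,\mathcal{H})$ is the minimum $|A|$ over $A\subseteq X_E$ such that every pair $u_i,u_j\in X_E$ satisfying $\mathcal{R}'$ is distinguished by some vertex of $A$ (w.r.t. $d_{G,2}$). *)

theory Defs
  imports Main "HOL-Library.Extended_Nat"
begin

type_synonym 'a graph = "'a set \<times> ('a \<times> 'a) set"

definition verts :: "'a graph \<Rightarrow> 'a set" where "verts G = fst G"
definition edges :: "'a graph \<Rightarrow> ('a \<times> 'a) set" where "edges G = snd G"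

definition is_graph :: "'a graph \<Rightarrow> bool" where
  "is_graph G \<longleftrightarrow> finite (verts G) \<and> verts G \<noteq> {} \<and> edges G \<subseteq> verts G \<times> verts G
     \<and> sym (edges G) \<and> irrefl (edges G)"

definition adjacent :: "'a graph \<Rightarrow> 'a \<Rightarrow> 'a \<Rightarrow> bool" where
  "adjacent G x y \<longleftrightarrow> (x, y) \<in> edges G"

text \<open>Shortest-path distance; infinity if no path.\<close>
definition gdist :: "'a graph \<Rightarrow> 'a \<Rightarrow> 'a \<Rightarrow> enat" where
  "gdist G x y = Inf {enat n | n. (x, y) \<in> (edges G) ^^ n}"

definition gdist2 :: "'a graph \<Rightarrow> 'a \<Rightarrow> 'a \<Rightarrow> enat" where
  "gdist2 G x y = min (gdist G x y) 2"

definition connected_graph :: "'a graph \<Rightarrow> bool" where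
  "connected_graph G \<longleftrightarrow> (\<forall>x\<in>verts G. \<forall>y\<in>verts G. gdist G x y \<noteq> \<infinity>)"

definition open_nbhd :: "'a graph \<Rightarrow> 'a \<Rightarrow> 'a set" where
  "open_nbhd G v = {w \<in> verts G. adjacent G v w}"

definition closed_nbhd :: "'a graph \<Rightarrow> 'a \<Rightarrow> 'a set" where
  "closed_nbhd G v = insert v (open_nbhd G v)"

definition local_adj_resolving :: "'a graph \<Rightarrow> 'a set \<Rightarrow> bool" where
  "local_adj_resolving H S \<longleftrightarrow> S \<subseteq> verts H \<and>
     (\<forall>x\<in>verts H. \<forall>y\<in>verts H. adjacent H x y \<longrightarrow> (\<exists>s\<in>S. gdist2 H s x \<noteq> gdist2 H s y))"

definition adim_l :: "'a graph \<Rightarrow> nat" where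
  "adim_l H = (LEAST m. \<exists>S. local_adj_resolving H S \<and> card S = m)"

definition local_adj_basis :: "'a graph \<Rightarrow> 'a set \<Rightarrow> bool" where
  "local_adj_basis H B \<longleftrightarrow> local_adj_resolving H B \<and> card B = adim_l H"

definition edgeless :: "'a graph \<Rightarrow> bool" where
  "edgeless H \<longleftrightarrow> edges H = {}"

definition class_G :: "'a graph \<Rightarrow> bool" where
  "class_G H \<longleftrightarrow> (\<forall>B. local_adj_basis H B \<longrightarrow> (\<exists>v\<in>verts H. B \<subseteq> open_nbhd H v))"

definition twin_class :: "'a graph \<Rightarrow> 'a \<Rightarrow> 'a set" where
  "twin_class G x = {y \<in> verts G. closed_nbhd G y = closed_nbhd G x}"

definition nontrivial_twin_classes :: "'a graph \<Rightarrow> 'a set set" where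
  "nontrivial_twin_classes G = {twin_class G x | x. x \<in> verts G \<and> card (twin_class G x) \<ge> 2}"

definition T_set :: "'a graph \<Rightarrow> 'a set" where
  "T_set G = \<Union> (nontrivial_twin_classes G)"

definition lex_prod :: "'a graph \<Rightarrow> ('a \<Rightarrow> 'b graph) \<Rightarrow> ('a \<times> 'b) graph" where
  "lex_prod G H = (Sigma (verts G) (\<lambda>u. verts (H u)),
     {((u, v), (u', w)). u \<in> verts G \<and> u' \<in> verts G \<and> v \<in> verts (H u) \<and> w \<in> verts (H u') \<and>
        ((u, u') \<in> edges G \<or> (u = u' \<and> (v, w) \<in> edges (H u)))})"

definition V_E :: "'a graph \<Rightarrow> ('a \<Rightarrow> 'b graph) \<Rightarrow> 'a set" where
  "V_E G H = {u \<in> verts G - T_set G. edgeless (H u)}"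

definition I_set :: "'a graph \<Rightarrow> ('a \<Rightarrow> 'b graph) \<Rightarrow> 'a set" where
  "I_set G H = {u \<in> verts G. class_G (H u)}"

text \<open>Given a choice c U \<in> I \<inter> U for each nontrivial twin class U meeting I,
  I'_U = (I \<inter> U) - {c U}, and X_E = I - \<Union> I'_U.\<close>
definition X_E :: "'a graph \<Rightarrow> ('a \<Rightarrow> 'b graph) \<Rightarrow> ('a set \<Rightarrow> 'a) \<Rightarrow> 'a set" where
  "X_E G H c = I_set G H - (\<Union>U\<in>{U \<in> nontrivial_twin_classes G. I_set G H \<inter> U \<noteq> {}}.
                                 (I_set G H \<inter> U) - {c U})"

definition R' :: "'a graph \<Rightarrow> ('a \<Rightarrow> 'b graph) \<Rightarrow> ('a set \<Rightarrow> 'a) \<Rightarrow> 'a \<Rightarrow> 'a \<Rightarrow> bool" where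
  "R' G H c x y \<longleftrightarrow> x \<in> X_E G H c \<and> y \<in> X_E G H c \<and> adjacent G x y \<and>
     (\<forall>u \<in> verts G - (V_E G H \<union> {x, y}). gdist2 G u x = gdist2 G u y)"

definition rho' :: "'a graph \<Rightarrow> ('a \<Rightarrow> 'b graph) \<Rightarrow> ('a set \<Rightarrow> 'a) \<Rightarrow> nat" where
  "rho' G H c = (LEAST m. \<exists>A. A \<subseteq> X_E G H c \<and> card A = m \<and>
     (\<forall>x y. R' G H c x y \<longrightarrow> (\<exists>a\<in>A. gdist2 G a x \<noteq> gdist2 G a y)))"

end

theory Submission
  imports Defs
begin

text \<open>A vertex set of \<open>G \<circ> \<H>\<close> is a union of fibres \<open>{u} \<times> S\<^sub>u\<close>. It is a local adjacency
  resolving set iff every \<open>S\<^sub>u\<close> resolves \<open>H\<^sub>u\<close> and every edge \<open>u u'\<close> of \<open>G\<close> whose two fibres both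
  lie in open neighbourhoods is separated in \<open>G\<close> by a third vertex with nonempty fibre. A fibre
  avoiding all open neighbourhoods is free for \<open>H\<^sub>u \<notin> \<G>\<close> and costs exactly one vertex for
  \<open>H\<^sub>u \<in> \<G>\<close>, so \<open>adim\<^sub>l(G \<circ> \<H>)\<close> exceeds \<open>\<Sum> adim\<^sub>l(H\<^sub>i)\<close> by the least size of an admissible
  set \<open>Z \<subseteq> I\<close> of vertices paying this extra vertex. Two true twins in \<open>I - Z\<close> can never be
  separated, so \<open>Z\<close> contains all but at most one vertex of each \<open>I \<inter> U\<^sub>j\<close>; and an \<open>\<R>'\<close>-pair
  of representatives can only be separated by a vertex of \<open>V\<^sub>E\<close>, which must then lie in \<open>Z\<close>.
  Counting both kinds of vertices gives \<open>\<Sum>(|I \<inter> U\<^sub>j| - 1) + \<rho>'\<close> as the least size of \<open>Z\<close>.\<close>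

section \<open>Adjacency distance\<close>

lemma gdist_le_enat: "(x, y) \<in> edges G ^^ n \<Longrightarrow> gdist G x y \<le> enat n"
  unfolding gdist_def by (rule Inf_lower) blast

lemma enat_le_gdist: "(\<And>m. m < n \<Longrightarrow> (x, y) \<notin> edges G ^^ m) \<Longrightarrow> enat n \<le> gdist G x y"
  unfolding gdist_def by (rule Inf_greatest) (auto simp: not_less[symmetric])

lemma gdist2_eq_if:
  "gdist2 G x y = (if x = y then 0 else if (x, y) \<in> edges G then 1 else 2)"
proof -
  consider "x = y" | "x \<noteq> y" "(x, y) \<in> edges G" | "x \<noteq> y" "(x, y) \<notin> edges G"
    by blast
  then show ?thesis
  proof cases
    case 1
    then have "gdist G x y \<le> enat 0" by (intro gdist_le_enat) simp
    with 1 show ?thesis by (simp add: gdist2_def zero_enat_def[symmetric])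
  next
    case 2
    then have "gdist G x y \<le> enat 1" "enat 1 \<le> gdist G x y"
      by (auto intro!: gdist_le_enat enat_le_gdist)
    then have "gdist G x y = 1" by (simp add: one_enat_def)
    with 2 show ?thesis by (simp add: gdist2_def)
  next
    case 3
    then have "enat 2 \<le> gdist G x y"
      by (intro enat_le_gdist) (auto simp: less_Suc_eq numeral_2_eq_2)
    with 3 show ?thesis by (simp add: gdist2_def min_def numeral_eq_enat)
  qed
qed

lemma is_graph_edge_verts: "is_graph G \<Longrightarrow> (x, y) \<in> edges G \<Longrightarrow> x \<in> verts G \<and> y \<in> verts G"
  unfolding is_graph_def by blast

lemma is_graph_edge_sym: "is_graph G \<Longrightarrow> (x, y) \<in> edges G \<Longrightarrow> (y, x) \<in> edges G"
  unfolding is_graph_def by (blast dest: symD)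

lemma is_graph_edge_neq: "is_graph G \<Longrightarrow> (x, y) \<in> edges G \<Longrightarrow> x \<noteq> y"
  unfolding is_graph_def irrefl_def by blast

lemma gdist2_sym: "is_graph G \<Longrightarrow> gdist2 G x y = gdist2 G y x"
  by (auto simp: gdist2_eq_if dest: is_graph_edge_sym)

lemma mem_closed_nbhd_iff:
  "is_graph G \<Longrightarrow> a \<in> closed_nbhd G x \<longleftrightarrow> a = x \<or> (a, x) \<in> edges G"
  unfolding closed_nbhd_def open_nbhd_def adjacent_def
  by (auto dest: is_graph_edge_sym is_graph_edge_verts)

lemma closed_nbhd_sym: "is_graph G \<Longrightarrow> a \<in> closed_nbhd G x \<longleftrightarrow> x \<in> closed_nbhd G a"
  by (auto simp: mem_closed_nbhd_iff dest: is_graph_edge_sym)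

lemma gdist2_eq_closed_nbhd:
  "is_graph G \<Longrightarrow> gdist2 G a x = (if a = x then 0 else if a \<in> closed_nbhd G x then 1 else 2)"
  by (simp add: gdist2_eq_if mem_closed_nbhd_iff)

lemma gdist2_eq_1_iff: "is_graph H \<Longrightarrow> gdist2 H z v = 1 \<longleftrightarrow> z \<in> open_nbhd H v"
  unfolding open_nbhd_def adjacent_def
  by (auto simp: gdist2_eq_if dest: is_graph_edge_sym is_graph_edge_verts is_graph_edge_neq)

section \<open>True twins\<close>

definition true_twins :: "'a graph \<Rightarrow> 'a \<Rightarrow> 'a \<Rightarrow> bool" where
  "true_twins G x y \<longleftrightarrow> x \<in> verts G \<and> y \<in> verts G \<and> closed_nbhd G x = closed_nbhd G y"

lemma true_twins_sym: "true_twins G x y \<Longrightarrow> true_twins G y x"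
  and true_twins_trans: "true_twins G x y \<Longrightarrow> true_twins G y z \<Longrightarrow> true_twins G x z"
  unfolding true_twins_def by auto

lemma true_twins_iff_twin_class: "true_twins G x y \<longleftrightarrow> x \<in> verts G \<and> y \<in> twin_class G x"
  unfolding true_twins_def twin_class_def by auto

lemma true_twins_adjacent:
  assumes "is_graph G" "true_twins G x y" "x \<noteq> y"
  shows "(x, y) \<in> edges G"
proof -
  have "x \<in> closed_nbhd G y"
    using assms(2) unfolding true_twins_def closed_nbhd_def by auto
  with assms show ?thesis by (simp add: mem_closed_nbhd_iff)
qed

lemma gdist2_true_twins:
  assumes "is_graph G" "true_twins G x y" "a \<noteq> x" "a \<noteq> y"
  shows "gdist2 G a x = gdist2 G a y"
  using assms by (simp add: gdist2_eq_closed_nbhd true_twins_def)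

lemma separator_not_true_twin:
  assumes G: "is_graph G" and e: "(u, u') \<in> edges G" and w: "w \<noteq> u" "w \<noteq> u'"
    and sep: "gdist2 G w u \<noteq> gdist2 G w u'"
  shows "\<not> true_twins G w u"
proof
  assume tw: "true_twins G w u"
  have "u' \<in> closed_nbhd G u"
    using is_graph_edge_sym[OF G e] by (simp add: mem_closed_nbhd_iff[OF G])
  with tw have "u' \<in> closed_nbhd G w"
    by (simp add: true_twins_def)
  moreover have "w \<in> closed_nbhd G u"
    using tw unfolding true_twins_def closed_nbhd_def by blast
  ultimately show False
    using sep w closed_nbhd_sym[OF G, of u' w] by (simp add: gdist2_eq_closed_nbhd[OF G])
qed

lemma true_twin_separates_edge:
  assumes G: "is_graph G" and e: "(u, u') \<in> edges G" and w: "w \<noteq> u" "w \<noteq> u'"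
    and sep: "gdist2 G w u \<noteq> gdist2 G w u'" and tw: "true_twins G w t"
  shows "t \<noteq> u \<and> t \<noteq> u' \<and> gdist2 G t u \<noteq> gdist2 G t u'"
proof -
  have "\<not> true_twins G w u"
    using separator_not_true_twin[OF G e w sep] .
  moreover have "\<not> true_twins G w u'"
    using separator_not_true_twin[OF G is_graph_edge_sym[OF G e] w(2,1)] sep by metis
  ultimately have "t \<noteq> u" "t \<noteq> u'"
    using tw by auto
  moreover have "gdist2 G t u \<noteq> gdist2 G t u'"
  proof (cases "t = w")
    case False
    then show ?thesis
      using sep w \<open>t \<noteq> u\<close> \<open>t \<noteq> u'\<close> gdist2_true_twins[OF G tw]
      by (metis gdist2_sym[OF G])
  qed (use sep in simp)
  ultimately show ?thesis by blast
qed

lemma true_twins_edge: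
  assumes G: "is_graph G" and e: "(x, y) \<in> edges G" and nt: "\<not> true_twins G x y"
    and tx: "true_twins G x x'" and ty: "true_twins G y y'"
  shows "(x', y') \<in> edges G"
proof -
  have "y \<in> closed_nbhd G x"
    using e by (simp add: mem_closed_nbhd_iff[OF G] is_graph_edge_sym[OF G])
  then have "x' \<in> closed_nbhd G y'"
    using tx ty closed_nbhd_sym[OF G] unfolding true_twins_def by metis
  moreover have "x' \<noteq> y'"
    using nt tx ty true_twins_sym true_twins_trans by metis
  ultimately show ?thesis
    by (simp add: mem_closed_nbhd_iff[OF G])
qed

lemma true_twins_transfer_separation:
  assumes G: "is_graph G" and e: "(x, y) \<in> edges G" and nt: "\<not> true_twins G x y"
    and tx: "true_twins G x x'" and ty: "true_twins G y y'"
    and a: "a \<noteq> x'" "a \<noteq> y'" and sep: "gdist2 G a x' \<noteq> gdist2 G a y'"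
  shows "a \<noteq> x \<and> a \<noteq> y \<and> gdist2 G a x \<noteq> gdist2 G a y"
proof -
  have "x \<in> closed_nbhd G x" "y \<in> closed_nbhd G y"
    by (simp_all add: closed_nbhd_def)
  moreover have "x \<in> closed_nbhd G y" "y \<in> closed_nbhd G x"
    using e is_graph_edge_sym[OF G e] by (simp_all add: mem_closed_nbhd_iff[OF G])
  ultimately have x: "x \<in> closed_nbhd G x'" "x \<in> closed_nbhd G y'"
    and y: "y \<in> closed_nbhd G y'" "y \<in> closed_nbhd G x'"
    using tx ty by (simp_all add: true_twins_def)
  have "a \<noteq> x"
    using x sep a by (auto simp: gdist2_eq_closed_nbhd[OF G])
  moreover have "a \<noteq> y"
    using y sep a by (auto simp: gdist2_eq_closed_nbhd[OF G])
  ultimately show ?thesis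
    using sep a gdist2_true_twins[OF G tx] gdist2_true_twins[OF G ty] by metis
qed

lemma nontrivial_twin_class_eq:
  "U \<in> nontrivial_twin_classes G \<Longrightarrow> y \<in> U \<Longrightarrow> U = twin_class G y"
  unfolding nontrivial_twin_classes_def twin_class_def by auto

lemma nontrivial_twin_class_true_twins:
  "U \<in> nontrivial_twin_classes G \<Longrightarrow> y \<in> U \<Longrightarrow> z \<in> U \<Longrightarrow> true_twins G y z"
  unfolding nontrivial_twin_classes_def twin_class_def true_twins_def by auto

lemma finite_nontrivial_twin_classes:
  "finite (verts G) \<Longrightarrow> finite (nontrivial_twin_classes G)"
  unfolding nontrivial_twin_classes_def twin_class_def by auto

lemma mem_T_set_iff:
  assumes fin: "finite (verts G)"
  shows "x \<in> T_set G \<longleftrightarrow> (\<exists>y. y \<noteq> x \<and> true_twins G x y)"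
proof
  assume "x \<in> T_set G"
  then obtain U where U: "U \<in> nontrivial_twin_classes G" "x \<in> U"
    unfolding T_set_def by blast
  then have "card U \<ge> 2"
    unfolding nontrivial_twin_classes_def by blast
  moreover from this have "finite U"
    by (intro card_ge_0_finite) simp
  ultimately have "\<not> (\<forall>a\<in>U. \<forall>b\<in>U. a = b)"
    by (simp add: card_le_Suc0_iff_eq[symmetric])
  then obtain y where "y \<in> U" "y \<noteq> x"
    by blast
  with nontrivial_twin_class_true_twins[OF U] show "\<exists>y. y \<noteq> x \<and> true_twins G x y"
    by blast
next
  assume "\<exists>y. y \<noteq> x \<and> true_twins G x y"
  then obtain y where y: "y \<noteq> x" "true_twins G x y" by blast
  then have sub: "{x, y} \<subseteq> twin_class G x" and x: "x \<in> verts G"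
    unfolding twin_class_def true_twins_def by auto
  have "finite (twin_class G x)"
    using fin unfolding twin_class_def by simp
  from card_mono[OF this sub] y(1) have "card (twin_class G x) \<ge> 2"
    by simp
  with x have "twin_class G x \<in> nontrivial_twin_classes G"
    unfolding nontrivial_twin_classes_def by blast
  moreover have "x \<in> twin_class G x"
    using sub by blast
  ultimately show "x \<in> T_set G"
    unfolding T_set_def by blast
qed

lemma twin_class_eq_singleton:
  assumes "finite (verts G)" "x \<in> verts G" "x \<notin> T_set G"
  shows "twin_class G x = {x}"
  using assms mem_T_set_iff[OF assms(1), of x]
  by (auto simp: true_twins_iff_twin_class) (auto simp: twin_class_def)

section \<open>Local adjacency resolving sets\<close>

lemma local_adj_resolving_verts: "is_graph H \<Longrightarrow> local_adj_resolving H (verts H)"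
  unfolding local_adj_resolving_def adjacent_def
  by (auto simp: gdist2_eq_if dest: is_graph_edge_neq)

lemma adim_l_le_card: "local_adj_resolving H S \<Longrightarrow> adim_l H \<le> card S"
  unfolding adim_l_def by (rule Least_le) blast

lemma local_adj_basis_exists: "is_graph H \<Longrightarrow> \<exists>B. local_adj_basis H B"
  unfolding local_adj_basis_def adim_l_def
  by (rule LeastI_ex) (blast intro: local_adj_resolving_verts)

lemma local_adj_resolving_finite: "is_graph H \<Longrightarrow> local_adj_resolving H S \<Longrightarrow> finite S"
  unfolding local_adj_resolving_def is_graph_def using finite_subset by blast

lemma local_adj_resolving_nonempty:
  "is_graph H \<Longrightarrow> local_adj_resolving H S \<Longrightarrow> \<not> edgeless H \<Longrightarrow> S \<noteq> {}"
  unfolding local_adj_resolving_def edgeless_def adjacent_def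
  by (auto dest: is_graph_edge_verts)

definition in_open_nbhd :: "'a graph \<Rightarrow> 'a set \<Rightarrow> bool" where
  "in_open_nbhd H S \<longleftrightarrow> (\<exists>v\<in>verts H. S \<subseteq> open_nbhd H v)"

lemma in_open_nbhd_empty: "is_graph H \<Longrightarrow> in_open_nbhd H {}"
  unfolding in_open_nbhd_def is_graph_def by auto

lemma edgeless_in_open_nbhd_iff: "edgeless H \<Longrightarrow> in_open_nbhd H S \<longleftrightarrow> S = {} \<and> verts H \<noteq> {}"
  unfolding in_open_nbhd_def edgeless_def open_nbhd_def adjacent_def by auto

lemma class_G_if_edgeless:
  assumes H: "is_graph H" and "edgeless H"
  shows "class_G H"
  unfolding class_G_def
proof (intro allI impI)
  fix B assume B: "local_adj_basis H B"
  have "local_adj_resolving H {}"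
    using \<open>edgeless H\<close> unfolding local_adj_resolving_def edgeless_def adjacent_def by simp
  then have "adim_l H = 0"
    using adim_l_le_card by fastforce
  with B have "B = {}"
    using local_adj_resolving_finite[OF H] unfolding local_adj_basis_def by auto
  then show "\<exists>v\<in>verts H. B \<subseteq> open_nbhd H v"
    using in_open_nbhd_empty[OF H] unfolding in_open_nbhd_def by simp
qed

lemma class_G_card_gt:
  assumes "class_G H" "local_adj_resolving H S" "\<not> in_open_nbhd H S"
  shows "adim_l H < card S"
proof -
  have "card S \<noteq> adim_l H"
    using assms unfolding class_G_def local_adj_basis_def in_open_nbhd_def by blast
  with adim_l_le_card[OF assms(2)] show ?thesis by simp
qed

lemma insert_not_in_open_nbhd:
  assumes H: "is_graph H" and B: "local_adj_resolving H B" "B \<subseteq> open_nbhd H w"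
  shows "\<not> in_open_nbhd H (insert w B)"
proof
  assume "in_open_nbhd H (insert w B)"
  then obtain w' where w': "w' \<in> verts H" "insert w B \<subseteq> open_nbhd H w'"
    unfolding in_open_nbhd_def by blast
  then have "(w', w) \<in> edges H" "w \<in> verts H"
    unfolding open_nbhd_def adjacent_def by blast+
  then obtain b where b: "b \<in> B" "gdist2 H b w \<noteq> gdist2 H b w'"
    using B(1) w'(1) is_graph_edge_sym[OF H] unfolding local_adj_resolving_def adjacent_def by blast
  then have "b \<in> open_nbhd H w" "b \<in> open_nbhd H w'"
    using B(2) w' by blast+
  with b show False
    by (simp add: gdist2_eq_1_iff[OF H, symmetric])
qed

lemma exists_resolving_not_in_open_nbhd:
  assumes H: "is_graph H"
  shows "\<exists>S. local_adj_resolving H S \<and> \<not> in_open_nbhd H S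
           \<and> card S \<le> adim_l H + of_bool (class_G H)"
proof -
  obtain B where B: "local_adj_resolving H B" "card B = adim_l H"
    using local_adj_basis_exists[OF H] unfolding local_adj_basis_def by blast
  consider "\<not> class_G H" | "\<not> in_open_nbhd H B" | w where "class_G H" "w \<in> verts H" "B \<subseteq> open_nbhd H w"
    unfolding in_open_nbhd_def by blast
  then show ?thesis
  proof cases
    case 1
    then show ?thesis
      unfolding class_G_def local_adj_basis_def in_open_nbhd_def by auto
  next
    case 2
    with B show ?thesis by auto
  next
    case 3
    have "local_adj_resolving H (insert w B)"
      using B(1) 3(2) unfolding local_adj_resolving_def by blast
    moreover have "card (insert w B) \<le> adim_l H + 1"
      using B local_adj_resolving_finite[OF H B(1)] by (simp add: card_insert_if)
    ultimately show ?thesis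
      using insert_not_in_open_nbhd[OF H B(1) 3(3)] 3(1) by (intro exI[of _ "insert w B"]) simp
  qed
qed

section \<open>Resolving sets of the lexicographic product\<close>

lemma verts_lex_prod: "verts (lex_prod G H) = Sigma (verts G) (\<lambda>u. verts (H u))"
  unfolding lex_prod_def verts_def by simp

lemma edges_lex_prod_iff:
  "((u, v), (u', w)) \<in> edges (lex_prod G H) \<longleftrightarrow>
     u \<in> verts G \<and> u' \<in> verts G \<and> v \<in> verts (H u) \<and> w \<in> verts (H u') \<and>
     ((u, u') \<in> edges G \<or> u = u' \<and> (v, w) \<in> edges (H u))"
  unfolding lex_prod_def edges_def verts_def by auto

lemma Sigma_Image_singleton: "S \<subseteq> Sigma A B \<Longrightarrow> S = Sigma A (\<lambda>u. S `` {u})"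
  by auto

lemma sum_add_of_bool_mem:
  "finite A \<Longrightarrow> Z \<subseteq> A \<Longrightarrow> (\<Sum>x\<in>A. f x + of_bool (x \<in> Z)) = sum f A + card Z"
  by (simp add: sum.distrib Int_absorb1 Int_def[symmetric])

locale lex_product =
  fixes G :: "'a graph" and H :: "'a \<Rightarrow> 'b graph"
  assumes graph_G: "is_graph G" and graph_H: "u \<in> verts G \<Longrightarrow> is_graph (H u)"
begin

lemma finite_verts: "finite (verts G)"
  using graph_G unfolding is_graph_def by blast

lemma gdist2_lex_prod:
  assumes "a \<in> verts G" "z \<in> verts (H a)" "u \<in> verts G" "v \<in> verts (H u)"
  shows "gdist2 (lex_prod G H) (a, z) (u, v) = (if a = u then gdist2 (H u) z v else gdist2 G a u)"
  using assms is_graph_edge_neq[OF graph_G]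
  by (auto simp: gdist2_eq_if edges_lex_prod_iff dest: is_graph_edge_verts[OF graph_G])

lemma gdist2_lex_prod_edge_eq_iff:
  assumes e: "(u, u') \<in> edges G" and "z \<in> verts (H u)" "v \<in> verts (H u)" "w \<in> verts (H u')"
  shows "gdist2 (lex_prod G H) (u, z) (u, v) = gdist2 (lex_prod G H) (u, z) (u', w)
           \<longleftrightarrow> z \<in> open_nbhd (H u) v"
proof -
  have u: "u \<in> verts G" "u' \<in> verts G" "u \<noteq> u'"
    using is_graph_edge_verts[OF graph_G e] is_graph_edge_neq[OF graph_G e] by auto
  then have "gdist2 G u u' = 1"
    using e by (simp add: gdist2_eq_if)
  with u assms show ?thesis
    by (simp add: gdist2_lex_prod gdist2_eq_1_iff[OF graph_H])
qed

lemma lex_prod_cross_edge_separated: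
  assumes F: "\<And>u. u \<in> verts G \<Longrightarrow> F u \<subseteq> verts (H u)"
    and sep: "in_open_nbhd (H u) (F u) \<Longrightarrow> in_open_nbhd (H u') (F u') \<Longrightarrow>
                \<exists>a\<in>verts G - {u, u'}. F a \<noteq> {} \<and> gdist2 G a u \<noteq> gdist2 G a u'"
    and e: "(u, u') \<in> edges G" and vw: "v \<in> verts (H u)" "w \<in> verts (H u')"
  shows "\<exists>s\<in>Sigma (verts G) F. gdist2 (lex_prod G H) s (u, v) \<noteq> gdist2 (lex_prod G H) s (u', w)"
proof -
  have u: "u \<in> verts G" "u' \<in> verts G"
    using is_graph_edge_verts[OF graph_G e] by auto
  consider "\<not> in_open_nbhd (H u) (F u)" | "\<not> in_open_nbhd (H u') (F u')"
    | "in_open_nbhd (H u) (F u)" "in_open_nbhd (H u') (F u')"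
    by blast
  then show ?thesis
  proof cases
    case 1
    then obtain z where "z \<in> F u" "z \<notin> open_nbhd (H u) v"
      using vw unfolding in_open_nbhd_def by blast
    with F[OF u(1)] show ?thesis
      using gdist2_lex_prod_edge_eq_iff[OF e _ vw] u by (intro bexI[of _ "(u, z)"]) auto
  next
    case 2
    then obtain z where z: "z \<in> F u'" "z \<notin> open_nbhd (H u') w"
      using vw unfolding in_open_nbhd_def by blast
    moreover from z F[OF u(2)] have "z \<in> verts (H u')"
      by blast
    ultimately have "gdist2 (lex_prod G H) (u', z) (u, v) \<noteq> gdist2 (lex_prod G H) (u', z) (u', w)"
      using gdist2_lex_prod_edge_eq_iff[OF is_graph_edge_sym[OF graph_G e] _ vw(2,1)] by metis
    with z u show ?thesis
      by (intro bexI[of _ "(u', z)"]) auto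
  next
    case 3
    then obtain a z where a: "a \<in> verts G - {u, u'}" "z \<in> F a" "gdist2 G a u \<noteq> gdist2 G a u'"
      using sep by blast
    moreover from a F have "z \<in> verts (H a)"
      by blast
    ultimately show ?thesis
      using u vw by (intro bexI[of _ "(a, z)"]) (auto simp: gdist2_lex_prod)
  qed
qed

lemma lex_prod_resolving_SigmaI:
  assumes fibres: "\<And>u. u \<in> verts G \<Longrightarrow> local_adj_resolving (H u) (F u)"
    and sep: "\<And>u u'. (u, u') \<in> edges G \<Longrightarrow> in_open_nbhd (H u) (F u) \<Longrightarrow>
                in_open_nbhd (H u') (F u') \<Longrightarrow>
                \<exists>a\<in>verts G - {u, u'}. F a \<noteq> {} \<and> gdist2 G a u \<noteq> gdist2 G a u'"
  shows "local_adj_resolving (lex_prod G H) (Sigma (verts G) F)"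
  unfolding local_adj_resolving_def adjacent_def
proof (intro conjI ballI impI)
  have F: "F u \<subseteq> verts (H u)" if "u \<in> verts G" for u
    using fibres[OF that] unfolding local_adj_resolving_def by blast
  then show "Sigma (verts G) F \<subseteq> verts (lex_prod G H)"
    by (auto simp: verts_lex_prod)
  fix p q assume "p \<in> verts (lex_prod G H)" "q \<in> verts (lex_prod G H)"
    and pq: "(p, q) \<in> edges (lex_prod G H)"
  obtain u v u' w where p: "p = (u, v)" and q: "q = (u', w)"
    by (cases p, cases q)
  have uv: "u \<in> verts G" "v \<in> verts (H u)" "w \<in> verts (H u')"
    and e: "(u, u') \<in> edges G \<or> u = u' \<and> (v, w) \<in> edges (H u)"
    using pq by (simp_all add: p q edges_lex_prod_iff)
  show "\<exists>s\<in>Sigma (verts G) F. gdist2 (lex_prod G H) s p \<noteq> gdist2 (lex_prod G H) s q"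
  proof (cases "(u, u') \<in> edges G")
    case True
    then show ?thesis
      using lex_prod_cross_edge_separated[OF F sep] uv by (simp add: p q)
  next
    case False
    with e obtain z where z: "u' = u" "z \<in> F u" "gdist2 (H u) z v \<noteq> gdist2 (H u) z w"
      using fibres[OF uv(1)] uv unfolding local_adj_resolving_def adjacent_def by blast
    with F[OF uv(1)] show ?thesis
      using uv by (intro bexI[of _ "(u, z)"]) (auto simp: p q gdist2_lex_prod)
  qed
qed

lemma lex_prod_resolving_subset:
  "local_adj_resolving (lex_prod G H) S \<Longrightarrow> S \<subseteq> Sigma (verts G) (\<lambda>u. verts (H u))"
  unfolding local_adj_resolving_def by (simp add: verts_lex_prod)

lemma lex_prod_resolving_fibre:
  assumes S: "local_adj_resolving (lex_prod G H) S" and u: "u \<in> verts G"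
  shows "local_adj_resolving (H u) (S `` {u})"
  unfolding local_adj_resolving_def adjacent_def
proof (intro conjI ballI impI)
  show "S `` {u} \<subseteq> verts (H u)"
    using lex_prod_resolving_subset[OF S] by blast
  fix v w assume vw: "v \<in> verts (H u)" "w \<in> verts (H u)" "(v, w) \<in> edges (H u)"
  then have "((u, v), (u, w)) \<in> edges (lex_prod G H)"
    using u by (simp add: edges_lex_prod_iff)
  then obtain a z where az: "(a, z) \<in> S"
    "gdist2 (lex_prod G H) (a, z) (u, v) \<noteq> gdist2 (lex_prod G H) (a, z) (u, w)"
    using S vw u unfolding local_adj_resolving_def adjacent_def by (fastforce simp: verts_lex_prod)
  moreover have "a \<in> verts G" "z \<in> verts (H a)"
    using az(1) lex_prod_resolving_subset[OF S] by auto
  ultimately show "\<exists>s\<in>S `` {u}. gdist2 (H u) s v \<noteq> gdist2 (H u) s w"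
    using u vw by (cases "a = u") (auto simp: gdist2_lex_prod)
qed

lemma lex_prod_resolving_separates:
  assumes S: "local_adj_resolving (lex_prod G H) S" and e: "(u, u') \<in> edges G"
    and nbhd: "in_open_nbhd (H u) (S `` {u})" "in_open_nbhd (H u') (S `` {u'})"
  shows "\<exists>a\<in>verts G - {u, u'}. S `` {a} \<noteq> {} \<and> gdist2 G a u \<noteq> gdist2 G a u'"
proof -
  have u: "u \<in> verts G" "u' \<in> verts G"
    using is_graph_edge_verts[OF graph_G e] by auto
  obtain v w where v: "v \<in> verts (H u)" "S `` {u} \<subseteq> open_nbhd (H u) v"
    and w: "w \<in> verts (H u')" "S `` {u'} \<subseteq> open_nbhd (H u') w"
    using nbhd unfolding in_open_nbhd_def by blast
  have "((u, v), (u', w)) \<in> edges (lex_prod G H)"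
    using u v w e by (simp add: edges_lex_prod_iff)
  then obtain a z where az: "(a, z) \<in> S"
    and sep: "gdist2 (lex_prod G H) (a, z) (u, v) \<noteq> gdist2 (lex_prod G H) (a, z) (u', w)"
    using S u v w unfolding local_adj_resolving_def adjacent_def by (fastforce simp: verts_lex_prod)
  have a: "a \<in> verts G" "z \<in> verts (H a)"
    using az lex_prod_resolving_subset[OF S] by auto
  have "a \<noteq> u"
    using sep az v a gdist2_lex_prod_edge_eq_iff[OF e _ v(1) w(1)] by blast
  moreover have "a \<noteq> u'"
    using sep az w a gdist2_lex_prod_edge_eq_iff[OF is_graph_edge_sym[OF graph_G e] _ w(1) v(1)]
    by (metis Image_singleton_iff subsetD)
  ultimately show ?thesis
    using a az sep u v w by (auto simp: gdist2_lex_prod)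
qed

lemma is_graph_lex_prod: "is_graph (lex_prod G H)"
proof -
  have "finite (verts G)" "verts G \<noteq> {}"
    and "\<And>u. u \<in> verts G \<Longrightarrow> finite (verts (H u)) \<and> verts (H u) \<noteq> {}"
    using graph_G graph_H unfolding is_graph_def by auto
  then have "finite (verts (lex_prod G H))" "verts (lex_prod G H) \<noteq> {}"
    by (auto simp: verts_lex_prod)
  moreover have "edges (lex_prod G H) \<subseteq> verts (lex_prod G H) \<times> verts (lex_prod G H)"
    by (auto simp: verts_lex_prod edges_lex_prod_iff)
  moreover have "sym (edges (lex_prod G H))"
    by (rule symI)
      (auto simp: edges_lex_prod_iff dest: is_graph_edge_sym[OF graph_G] is_graph_edge_sym[OF graph_H])
  moreover have "irrefl (edges (lex_prod G H))"
    by (auto simp: irrefl_def edges_lex_prod_iff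
        dest: is_graph_edge_neq[OF graph_G] is_graph_edge_neq[OF graph_H])
  ultimately show ?thesis
    unfolding is_graph_def by blast
qed

abbreviation I :: "'a set" where
  "I \<equiv> I_set G H"

lemma I_subset_verts: "I \<subseteq> verts G"
  unfolding I_set_def by blast

lemma exists_fibre_sets:
  assumes Z: "Z \<subseteq> I"
  shows "\<exists>F. \<forall>u\<in>verts G. local_adj_resolving (H u) (F u)
           \<and> card (F u) \<le> adim_l (H u) + of_bool (u \<in> Z)
           \<and> (u \<notin> I - Z \<longrightarrow> \<not> in_open_nbhd (H u) (F u))"
proof (rule bchoice, rule ballI)
  fix u assume u: "u \<in> verts G"
  show "\<exists>S. local_adj_resolving (H u) S \<and> card S \<le> adim_l (H u) + of_bool (u \<in> Z)
          \<and> (u \<notin> I - Z \<longrightarrow> \<not> in_open_nbhd (H u) S)"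
  proof (cases "u \<in> I - Z")
    case True
    then show ?thesis
      using local_adj_basis_exists[OF graph_H[OF u]] unfolding local_adj_basis_def by auto
  next
    case False
    then have "of_bool (class_G (H u)) \<le> (of_bool (u \<in> Z) :: nat)"
      using u unfolding I_set_def by auto
    moreover obtain S where S: "local_adj_resolving (H u) S" "\<not> in_open_nbhd (H u) S"
      "card S \<le> adim_l (H u) + of_bool (class_G (H u))"
      using exists_resolving_not_in_open_nbhd[OF graph_H[OF u]] by blast
    ultimately have "card S \<le> adim_l (H u) + of_bool (u \<in> Z)"
      by linarith
    with S show ?thesis
      by blast
  qed
qed

text \<open>\<open>Z\<close> collects the vertices of \<open>I\<close> whose fibre is to avoid every open neighbourhood, which
  costs one vertex more than a basis (outside \<open>I\<close> this is free). The fibre of a vertex outside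
  \<open>I - Z\<close>, or with a factor that has edges, is then nonempty; these are the vertices that may
  separate an edge of \<open>G\<close> between two vertices of \<open>I - Z\<close>.\<close>
definition admissible :: "'a set \<Rightarrow> bool" where
  "admissible Z \<longleftrightarrow> Z \<subseteq> I \<and>
     (\<forall>x y. (x, y) \<in> edges G \<longrightarrow> x \<in> I - Z \<longrightarrow> y \<in> I - Z \<longrightarrow>
        (\<exists>a\<in>verts G - {x, y}. (a \<notin> I - Z \<or> \<not> edgeless (H a)) \<and> gdist2 G a x \<noteq> gdist2 G a y))"

lemma admissible_subset: "admissible Z \<Longrightarrow> Z \<subseteq> I"
  unfolding admissible_def by blast

lemma admissible_separates:
  "admissible Z \<Longrightarrow> (x, y) \<in> edges G \<Longrightarrow> x \<in> I - Z \<Longrightarrow> y \<in> I - Z \<Longrightarrow>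
     \<exists>a\<in>verts G - {x, y}. (a \<notin> I - Z \<or> \<not> edgeless (H a)) \<and> gdist2 G a x \<noteq> gdist2 G a y"
  unfolding admissible_def by blast

lemma adim_l_lex_prod_le:
  assumes Z: "admissible Z"
  shows "adim_l (lex_prod G H) \<le> (\<Sum>u\<in>verts G. adim_l (H u)) + card Z"
proof -
  obtain F where F: "\<And>u. u \<in> verts G \<Longrightarrow> local_adj_resolving (H u) (F u)"
    "\<And>u. u \<in> verts G \<Longrightarrow> card (F u) \<le> adim_l (H u) + of_bool (u \<in> Z)"
    "\<And>u. u \<in> verts G \<Longrightarrow> u \<notin> I - Z \<Longrightarrow> \<not> in_open_nbhd (H u) (F u)"
    using exists_fibre_sets[OF admissible_subset[OF Z]] by blast
  have "local_adj_resolving (lex_prod G H) (Sigma (verts G) F)"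
  proof (rule lex_prod_resolving_SigmaI)
    fix u u' assume e: "(u, u') \<in> edges G"
      and nbhd: "in_open_nbhd (H u) (F u)" "in_open_nbhd (H u') (F u')"
    then have "u \<in> I - Z" "u' \<in> I - Z"
      using F(3) is_graph_edge_verts[OF graph_G e] by auto
    then obtain a where a: "a \<in> verts G - {u, u'}" "a \<notin> I - Z \<or> \<not> edgeless (H a)"
      "gdist2 G a u \<noteq> gdist2 G a u'"
      using admissible_separates[OF Z e] by blast
    have av: "a \<in> verts G"
      using a(1) by blast
    have "F a \<noteq> {}"
    proof (cases "a \<in> I - Z")
      case True
      with a have "\<not> edgeless (H a)" by blast
      then show ?thesis
        by (rule local_adj_resolving_nonempty[OF graph_H[OF av] F(1)[OF av]])
    next
      case False
      then have "\<not> in_open_nbhd (H a) (F a)"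
        by (rule F(3)[OF av])
      then show ?thesis
        using in_open_nbhd_empty[OF graph_H[OF av]] by metis
    qed
    with a show "\<exists>a\<in>verts G - {u, u'}. F a \<noteq> {} \<and> gdist2 G a u \<noteq> gdist2 G a u'"
      by blast
  qed (rule F(1))
  then have "adim_l (lex_prod G H) \<le> card (Sigma (verts G) F)"
    by (rule adim_l_le_card)
  also have "\<dots> = (\<Sum>u\<in>verts G. card (F u))"
    using finite_verts F(1) local_adj_resolving_finite[OF graph_H] by simp
  also have "\<dots> \<le> (\<Sum>u\<in>verts G. adim_l (H u) + of_bool (u \<in> Z))"
    by (rule sum_mono) (rule F(2))
  also have "\<dots> = (\<Sum>u\<in>verts G. adim_l (H u)) + card Z"
    using finite_verts admissible_subset[OF Z] I_subset_verts by (intro sum_add_of_bool_mem) auto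
  finally show ?thesis .
qed

lemma admissible_fibres:
  assumes S: "local_adj_resolving (lex_prod G H) S"
  shows "admissible {u \<in> I. \<not> in_open_nbhd (H u) (S `` {u})}" (is "admissible ?Z")
  unfolding admissible_def
proof (intro conjI allI impI)
  fix x y assume e: "(x, y) \<in> edges G" and xy: "x \<in> I - ?Z" "y \<in> I - ?Z"
  then obtain a where a: "a \<in> verts G - {x, y}" "S `` {a} \<noteq> {}" "gdist2 G a x \<noteq> gdist2 G a y"
    using lex_prod_resolving_separates[OF S e] by blast
  have "a \<notin> I - ?Z \<or> \<not> edgeless (H a)"
    using a(2) edgeless_in_open_nbhd_iff by blast
  with a show "\<exists>a\<in>verts G - {x, y}. (a \<notin> I - ?Z \<or> \<not> edgeless (H a)) \<and> gdist2 G a x \<noteq> gdist2 G a y"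
    by blast
qed blast

lemma card_fibre_ge:
  assumes S: "local_adj_resolving (lex_prod G H) S" and u: "u \<in> verts G"
  shows "adim_l (H u) + of_bool (u \<in> I \<and> \<not> in_open_nbhd (H u) (S `` {u})) \<le> card (S `` {u})"
proof (cases "u \<in> I \<and> \<not> in_open_nbhd (H u) (S `` {u})")
  case True
  then have "class_G (H u)"
    unfolding I_set_def by blast
  with True show ?thesis
    using class_G_card_gt lex_prod_resolving_fibre[OF S u] by fastforce
next
  case False
  then show ?thesis
    using adim_l_le_card[OF lex_prod_resolving_fibre[OF S u]] by auto
qed

lemma adim_l_lex_prod_ge:
  "\<exists>Z. admissible Z \<and> (\<Sum>u\<in>verts G. adim_l (H u)) + card Z \<le> adim_l (lex_prod G H)"
proof -
  obtain S where S: "local_adj_resolving (lex_prod G H) S" "card S = adim_l (lex_prod G H)"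
    using local_adj_basis_exists[OF is_graph_lex_prod] unfolding local_adj_basis_def by blast
  define Z where "Z = {u \<in> I. \<not> in_open_nbhd (H u) (S `` {u})}"
  have "(\<Sum>u\<in>verts G. adim_l (H u)) + card Z = (\<Sum>u\<in>verts G. adim_l (H u) + of_bool (u \<in> Z))"
    using finite_verts I_subset_verts by (intro sum_add_of_bool_mem[symmetric]) (auto simp: Z_def)
  also have "\<dots> \<le> (\<Sum>u\<in>verts G. card (S `` {u}))"
    using card_fibre_ge[OF S(1)] by (intro sum_mono) (simp add: Z_def)
  also have "\<dots> = card (Sigma (verts G) (\<lambda>u. S `` {u}))"
    using finite_verts lex_prod_resolving_fibre[OF S(1)] local_adj_resolving_finite[OF graph_H] by simp
  also have "\<dots> = adim_l (lex_prod G H)"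
    using Sigma_Image_singleton[OF lex_prod_resolving_subset[OF S(1)]] S(2) by simp
  finally show ?thesis
    using admissible_fibres[OF S(1)] unfolding Z_def by blast
qed

end

section \<open>The least size of an admissible set\<close>

locale lex_product_choice = lex_product +
  fixes c :: "'a set \<Rightarrow> 'a"
  assumes choice_mem: "\<And>U. U \<in> nontrivial_twin_classes G \<Longrightarrow> I_set G H \<inter> U \<noteq> {} \<Longrightarrow>
    c U \<in> I_set G H \<inter> U"
begin

abbreviation I_classes :: "'a set set" where
  "I_classes \<equiv> {U \<in> nontrivial_twin_classes G. I \<inter> U \<noteq> {}}"

abbreviation XE :: "'a set" where
  "XE \<equiv> X_E G H c"

lemma finite_I: "finite I"
  using finite_verts I_subset_verts by (rule finite_subset[rotated])

lemma finite_I_classes: "finite I_classes"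
  using finite_nontrivial_twin_classes[OF finite_verts] by simp

lemma X_E_subset: "XE \<subseteq> I"
  unfolding X_E_def by blast

lemma X_E_eq_choice: "x \<in> XE \<Longrightarrow> U \<in> nontrivial_twin_classes G \<Longrightarrow> x \<in> U \<Longrightarrow> x = c U"
  unfolding X_E_def by blast

lemma diff_subset_X_E: "(\<Union>U\<in>I_classes. I \<inter> U - {c U}) \<subseteq> Z \<Longrightarrow> I - Z \<subseteq> XE"
  unfolding X_E_def by blast

lemma V_E_subset_X_E: "V_E G H \<subseteq> XE"
proof
  fix x assume x: "x \<in> V_E G H"
  then have "x \<in> I"
    using class_G_if_edgeless[OF graph_H] unfolding V_E_def I_set_def by blast
  with x show "x \<in> XE"
    unfolding X_E_def V_E_def T_set_def by blast
qed

lemma X_E_true_twins_eq: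
  assumes "x \<in> XE" "y \<in> XE" "true_twins G x y"
  shows "x = y"
proof (rule ccontr)
  assume "x \<noteq> y"
  with assms(3) have "x \<in> T_set G"
    using mem_T_set_iff[OF finite_verts] by metis
  then obtain U where U: "U \<in> nontrivial_twin_classes G" "x \<in> U"
    unfolding T_set_def by blast
  then have "y \<in> U"
    using assms(3) nontrivial_twin_class_eq[OF U] by (simp add: true_twins_iff_twin_class)
  with U assms(1,2) X_E_eq_choice have "x = y"
    by metis
  with \<open>x \<noteq> y\<close> show False ..
qed

abbreviation separates_R' :: "'a set \<Rightarrow> bool" where
  "separates_R' A \<equiv> \<forall>x y. R' G H c x y \<longrightarrow> (\<exists>a\<in>A. gdist2 G a x \<noteq> gdist2 G a y)"

lemma rho'_le_card: "A \<subseteq> XE \<Longrightarrow> separates_R' A \<Longrightarrow> rho' G H c \<le> card A"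
  unfolding rho'_def by (rule Least_le) blast

lemma rho'_witness: "\<exists>A. A \<subseteq> XE \<and> card A = rho' G H c \<and> separates_R' A"
proof -
  have "separates_R' XE"
  proof (intro allI impI)
    fix x y assume "R' G H c x y"
    then have "x \<in> XE" "(x, y) \<in> edges G"
      unfolding R'_def adjacent_def by blast+
    then show "\<exists>a\<in>XE. gdist2 G a x \<noteq> gdist2 G a y"
      using is_graph_edge_neq[OF graph_G] by (auto simp: gdist2_eq_if)
  qed
  then have "\<exists>m A. A \<subseteq> XE \<and> card A = m \<and> separates_R' A"
    by blast
  then show ?thesis
    unfolding rho'_def by (rule LeastI_ex)
qed

text \<open>An edgeless factor outside \<open>V\<^sub>E\<close> sits on a vertex of some \<open>U\<^sub>j\<close>; of two vertices of \<open>U\<^sub>j\<close>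
  at most one is the chosen \<open>c U\<^sub>j\<close>, and any other one lies outside \<open>I - Z\<close>.\<close>
lemma separator_outside_I_diff:
  assumes choices: "(\<Union>U\<in>I_classes. I \<inter> U - {c U}) \<subseteq> Z" and e: "(u, u') \<in> edges G"
    and w: "w \<in> verts G" "w \<notin> V_E G H" "w \<noteq> u" "w \<noteq> u'"
    and sep: "gdist2 G w u \<noteq> gdist2 G w u'"
  shows "\<exists>a\<in>verts G - {u, u'}. (a \<notin> I - Z \<or> \<not> edgeless (H a)) \<and> gdist2 G a u \<noteq> gdist2 G a u'"
proof (cases "edgeless (H w)")
  case False
  with w sep show ?thesis by blast
next
  case True
  with w have "w \<in> T_set G" "w \<in> I"
    using class_G_if_edgeless[OF graph_H] unfolding V_E_def I_set_def by blast+
  then obtain t U where t: "t \<noteq> w" "true_twins G w t"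
    and U: "U \<in> nontrivial_twin_classes G" "w \<in> U"
    using mem_T_set_iff[OF finite_verts] unfolding T_set_def by blast
  have "t \<in> U"
    using t(2) nontrivial_twin_class_eq[OF U] by (simp add: true_twins_iff_twin_class)
  obtain b where b: "b \<in> {w, t}" "b \<noteq> c U"
    using t(1) by blast
  have "b \<in> verts G - {u, u'} \<and> gdist2 G b u \<noteq> gdist2 G b u'"
    using b w sep true_twin_separates_edge[OF graph_G e w(3,4) sep t(2)] t(2)
    unfolding true_twins_def by blast
  moreover have "b \<notin> I - Z"
    using b U \<open>t \<in> U\<close> \<open>w \<in> I\<close> choices by blast
  ultimately show ?thesis
    by blast
qed

lemma admissible_if_separates_R':
  assumes ZI: "Z \<subseteq> I" and choices: "(\<Union>U\<in>I_classes. I \<inter> U - {c U}) \<subseteq> Z"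
    and A: "A \<subseteq> Z" "separates_R' A"
  shows "admissible Z"
  unfolding admissible_def
proof (intro conjI allI impI)
  fix u u' assume e: "(u, u') \<in> edges G" and u: "u \<in> I - Z" "u' \<in> I - Z"
  show "\<exists>a\<in>verts G - {u, u'}. (a \<notin> I - Z \<or> \<not> edgeless (H a)) \<and> gdist2 G a u \<noteq> gdist2 G a u'"
  proof (cases "R' G H c u u'")
    case True
    then obtain a where "a \<in> A" "gdist2 G a u \<noteq> gdist2 G a u'"
      using A(2) by blast
    with A(1) ZI u I_subset_verts show ?thesis
      by blast
  next
    case False
    moreover have "u \<in> XE" "u' \<in> XE"
      using u diff_subset_X_E[OF choices] by blast+
    ultimately obtain w where "w \<in> verts G" "w \<notin> V_E G H" "w \<noteq> u" "w \<noteq> u'"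
      "gdist2 G w u \<noteq> gdist2 G w u'"
      using e unfolding R'_def adjacent_def by blast
    then show ?thesis
      by (rule separator_outside_I_diff[OF choices e])
  qed
qed (rule ZI)

lemma exists_admissible_card_le:
  "\<exists>Z. admissible Z \<and> card Z \<le> (\<Sum>U\<in>I_classes. card (I \<inter> U) - 1) + rho' G H c"
proof -
  obtain A where A: "A \<subseteq> XE" "card A = rho' G H c" "separates_R' A"
    using rho'_witness by blast
  define Z where "Z = A \<union> (\<Union>U\<in>I_classes. I \<inter> U - {c U})"
  have "Z \<subseteq> I"
    using A(1) X_E_subset unfolding Z_def by blast
  then have "admissible Z"
    by (rule admissible_if_separates_R'[OF _ _ _ A(3)]) (auto simp: Z_def)
  have "card Z \<le> card A + card (\<Union>U\<in>I_classes. I \<inter> U - {c U})"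
    unfolding Z_def by (rule card_Un_le)
  also have "\<dots> \<le> card A + (\<Sum>U\<in>I_classes. card (I \<inter> U - {c U}))"
    using card_UN_le[OF finite_I_classes] by simp
  also have "(\<Sum>U\<in>I_classes. card (I \<inter> U - {c U})) = (\<Sum>U\<in>I_classes. card (I \<inter> U) - 1)"
    using choice_mem finite_I by (intro sum.cong) auto
  finally show ?thesis
    using \<open>admissible Z\<close> A(2) by (auto simp: add.commute)
qed

lemma admissible_card_class_diff:
  assumes Z: "admissible Z" and U: "U \<in> nontrivial_twin_classes G"
  shows "card (I \<inter> U - Z) \<le> 1"
proof -
  have "x = y" if xy: "x \<in> I \<inter> U - Z" "y \<in> I \<inter> U - Z" for x y
  proof (rule ccontr)
    assume "x \<noteq> y"
    moreover have tw: "true_twins G x y"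
      using xy nontrivial_twin_class_true_twins[OF U] by blast
    ultimately obtain a where "a \<in> verts G - {x, y}" "gdist2 G a x \<noteq> gdist2 G a y"
      using admissible_separates[OF Z true_twins_adjacent[OF graph_G tw]] xy by blast
    then show False
      using gdist2_true_twins[OF graph_G tw] by blast
  qed
  moreover have "finite (I \<inter> U - Z)"
    using finite_I by blast
  ultimately show ?thesis
    unfolding One_nat_def using card_le_Suc0_iff_eq by blast
qed

definition full_representatives :: "'a set \<Rightarrow> 'a set" where
  "full_representatives Z = {x \<in> XE. I \<inter> twin_class G x \<subseteq> Z}"

lemma admissible_separates_R':
  assumes Z: "admissible Z"
  shows "separates_R' (full_representatives Z)"
proof (intro allI impI)
  fix x y assume R: "R' G H c x y"
  then have X: "x \<in> XE" "y \<in> XE" and e: "(x, y) \<in> edges G"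
    and R'_sep: "\<And>w. w \<in> verts G - (V_E G H \<union> {x, y}) \<Longrightarrow> gdist2 G w x = gdist2 G w y"
    unfolding R'_def adjacent_def by blast+
  have "x \<noteq> y"
    using is_graph_edge_neq[OF graph_G e] .
  show "\<exists>a\<in>full_representatives Z. gdist2 G a x \<noteq> gdist2 G a y"
  proof (cases "x \<in> full_representatives Z \<or> y \<in> full_representatives Z")
    case True
    with e \<open>x \<noteq> y\<close> show ?thesis
      by (auto simp: gdist2_eq_if dest: is_graph_edge_sym[OF graph_G])
  next
    case False
    have "x \<in> verts G" "y \<in> verts G"
      using X X_E_subset I_subset_verts by blast+
    with False X obtain x' y' where x': "x' \<in> I - Z" "true_twins G x x'"
      and y': "y' \<in> I - Z" "true_twins G y y'"
      unfolding full_representatives_def true_twins_iff_twin_class by blast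
    have nt: "\<not> true_twins G x y"
      using X_E_true_twins_eq[OF X] \<open>x \<noteq> y\<close> by blast
    obtain a where a: "a \<in> verts G - {x', y'}" "a \<notin> I - Z \<or> \<not> edgeless (H a)"
      and sep': "gdist2 G a x' \<noteq> gdist2 G a y'"
      using admissible_separates[OF Z true_twins_edge[OF graph_G e nt x'(2) y'(2)] x'(1) y'(1)]
      by blast
    have sep: "a \<noteq> x" "a \<noteq> y" "gdist2 G a x \<noteq> gdist2 G a y"
      using true_twins_transfer_separation[OF graph_G e nt x'(2) y'(2) _ _ sep'] a(1) by blast+
    then have "a \<in> V_E G H"
      using R'_sep a(1) by blast
    then have "a \<in> XE" "a \<in> Z" "twin_class G a = {a}"
      using V_E_subset_X_E X_E_subset a(2) twin_class_eq_singleton[OF finite_verts]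
      unfolding V_E_def by blast+
    then have "a \<in> full_representatives Z"
      unfolding full_representatives_def by auto
    with sep show ?thesis
      by blast
  qed
qed

lemma card_full_representatives_le:
  assumes ZI: "Z \<subseteq> I"
  shows "card (full_representatives Z) \<le> card (Z - T_set G) + card {U \<in> I_classes. I \<inter> U \<subseteq> Z}"
proof -
  let ?C = "{U \<in> I_classes. I \<inter> U \<subseteq> Z}"
  have "full_representatives Z \<subseteq> (Z - T_set G) \<union> c ` ?C"
  proof
    fix x assume x: "x \<in> full_representatives Z"
    then have xI: "x \<in> I" "I \<inter> twin_class G x \<subseteq> Z"
      using X_E_subset unfolding full_representatives_def by blast+
    show "x \<in> (Z - T_set G) \<union> c ` ?C"
    proof (cases "x \<in> T_set G")
      case False
      with xI show ?thesis
        using I_subset_verts unfolding twin_class_def by blast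
    next
      case True
      then obtain U where U: "U \<in> nontrivial_twin_classes G" "x \<in> U"
        unfolding T_set_def by blast
      moreover have "x \<in> XE"
        using x unfolding full_representatives_def by blast
      ultimately have "x = c U" "U = twin_class G x"
        using X_E_eq_choice nontrivial_twin_class_eq by simp_all
      with U xI show ?thesis
        by blast
    qed
  qed
  moreover have "finite ?C"
    using finite_I_classes by (rule finite_subset[rotated]) blast
  then have "finite ((Z - T_set G) \<union> c ` ?C)"
    using finite_subset[OF ZI finite_I] by simp
  ultimately have "card (full_representatives Z) \<le> card ((Z - T_set G) \<union> c ` ?C)"
    by (intro card_mono)
  also have "\<dots> \<le> card (Z - T_set G) + card (c ` ?C)"
    by (rule card_Un_le)
  also have "card (c ` ?C) \<le> card ?C"
    using \<open>finite ?C\<close> by (rule card_image_le)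
  finally show ?thesis
    by simp
qed

lemma admissible_card_class_le:
  assumes Z: "admissible Z" and U: "U \<in> nontrivial_twin_classes G" "I \<inter> U \<noteq> {}"
  shows "card (I \<inter> U) - 1 + of_bool (I \<inter> U \<subseteq> Z) \<le> card (Z \<inter> U)"
proof (cases "I \<inter> U \<subseteq> Z")
  case True
  then have "Z \<inter> U = I \<inter> U"
    using admissible_subset[OF Z] by blast
  moreover have "card (I \<inter> U) \<ge> 1"
    using U(2) finite_I by (simp add: Suc_le_eq card_gt_0_iff)
  ultimately show ?thesis
    using True by simp
next
  case False
  have "card (I \<inter> U) \<le> card ((Z \<inter> U) \<union> (I \<inter> U - Z))"
    using finite_I admissible_subset[OF Z] by (intro card_mono) (auto intro: finite_subset)
  also have "\<dots> \<le> card (Z \<inter> U) + card (I \<inter> U - Z)"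
    by (rule card_Un_le)
  finally show ?thesis
    using admissible_card_class_diff[OF Z U(1)] False by simp
qed

lemma sum_I_classes_le:
  assumes Z: "admissible Z"
  shows "(\<Sum>U\<in>I_classes. card (I \<inter> U) - 1) + card {U \<in> I_classes. I \<inter> U \<subseteq> Z}
           \<le> card (Z \<inter> T_set G)"
proof -
  have finZ: "finite Z"
    using admissible_subset[OF Z] finite_I by (rule finite_subset)
  have "(\<Sum>U\<in>I_classes. card (I \<inter> U) - 1) + card {U \<in> I_classes. I \<inter> U \<subseteq> Z}
      = (\<Sum>U\<in>I_classes. card (I \<inter> U) - 1 + of_bool (U \<in> {U \<in> I_classes. I \<inter> U \<subseteq> Z}))"
    using finite_I_classes by (intro sum_add_of_bool_mem[symmetric]) auto
  also have "\<dots> \<le> (\<Sum>U\<in>I_classes. card (Z \<inter> U))"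
    using admissible_card_class_le[OF Z] by (intro sum_mono) auto
  also have "\<dots> = card (\<Union>U\<in>I_classes. Z \<inter> U)"
  proof (rule card_UN_disjoint[symmetric])
    have "U = U'" if "U \<in> nontrivial_twin_classes G" "U' \<in> nontrivial_twin_classes G"
      "x \<in> U" "x \<in> U'" for U U' x
      using nontrivial_twin_class_eq[OF that(1,3)] nontrivial_twin_class_eq[OF that(2,4)] by simp
    then show "\<forall>U\<in>I_classes. \<forall>U'\<in>I_classes. U \<noteq> U' \<longrightarrow> (Z \<inter> U) \<inter> (Z \<inter> U') = {}"
      by blast
  qed (use finite_I_classes finZ in auto)
  also have "\<dots> \<le> card (Z \<inter> T_set G)"
    using finZ by (intro card_mono) (auto simp: T_set_def)
  finally show ?thesis .
qed

lemma admissible_card_ge: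
  assumes Z: "admissible Z"
  shows "(\<Sum>U\<in>I_classes. card (I \<inter> U) - 1) + rho' G H c \<le> card Z"
proof -
  have "rho' G H c \<le> card (full_representatives Z)"
    using admissible_separates_R'[OF Z] unfolding full_representatives_def
    by (intro rho'_le_card) auto
  moreover have "card Z = card (Z \<inter> T_set G) + card (Z - T_set G)"
    using admissible_subset[OF Z] finite_I by (intro card_Int_Diff) (rule finite_subset)
  ultimately show ?thesis
    using card_full_representatives_le[OF admissible_subset[OF Z]] sum_I_classes_le[OF Z]
    by linarith
qed

end

theorem theorem7:
  fixes G :: "'a graph" and H :: "'a \<Rightarrow> 'b graph" and c :: "'a set \<Rightarrow> 'a"
  assumes "is_graph G" and "connected_graph G" and "card (verts G) \<ge> 2"
    and "\<forall>u\<in>verts G. is_graph (H u)"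
    and "\<forall>U\<in>nontrivial_twin_classes G. I_set G H \<inter> U \<noteq> {} \<longrightarrow> c U \<in> I_set G H \<inter> U"
  shows "adim_l (lex_prod G H) =
           (\<Sum>u\<in>verts G. adim_l (H u))
         + (\<Sum>U\<in>{U \<in> nontrivial_twin_classes G. I_set G H \<inter> U \<noteq> {}}. card (I_set G H \<inter> U) - 1)
         + rho' G H c"
proof -
  interpret lex_product_choice G H c
    using assms(1,4,5) by unfold_locales auto
  obtain Z where "admissible Z" "card Z \<le> (\<Sum>U\<in>I_classes. card (I \<inter> U) - 1) + rho' G H c"
    using exists_admissible_card_le by blast
  then have upper: "adim_l (lex_prod G H) \<le>
      (\<Sum>u\<in>verts G. adim_l (H u)) + (\<Sum>U\<in>I_classes. card (I \<inter> U) - 1) + rho' G H c"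
    using adim_l_lex_prod_le by fastforce
  obtain Z' where "admissible Z'" "(\<Sum>u\<in>verts G. adim_l (H u)) + card Z' \<le> adim_l (lex_prod G H)"
    using adim_l_lex_prod_ge by blast
  then have "(\<Sum>u\<in>verts G. adim_l (H u)) + (\<Sum>U\<in>I_classes. card (I \<inter> U) - 1) + rho' G H c
      \<le> adim_l (lex_prod G H)"
    using admissible_card_ge by fastforce
  with upper show ?thesis
    by linarith
qed

end
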